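(* Let $n \ge 2$, let $\bm{\zeta} = \zeta_1\zeta_2\cdots\zeta_n \in \{0,1\}^n$, and let $\mathcal{H}_C = \sum_{x\in\{0,1\}^n} f(x)\,|x\rangle\langle x|$ (with $f:\{0,1\}^n\to\mathbb{R}$) be an $n$-qubit cost Hamiltonian, diagonal in the computational basis, such that $\mathcal{H}_C|\bm{\zeta}\rangle = 0$. For $\beta\in\mathbb{R}$ define the constrained mixing unitary $$\mathcal{U}_M^{CM}(\beta) := G_n(\beta)\,G_{n-1}(\beta)\cdots G_1(\beta),$$ where $G_i(\beta)$ is the gate that applies the rotation $R_X(\beta)=e^{-i\beta X/2}$ to qubit $1+(i \bmod n)$, controlled by qubit $i$, the control being triggered when qubit $i$ is in state $|0\rangle$ if $\zeta_i=1$ and in state $|1\rangle$ if $\zeta_i=0$ (i.e. $G_i(\beta) = |\zeta_i\rangle\langle\zeta_i|_{i}\otimes I + |1-\zeta_i\rangle\langle 1-\zeta_i|_{i}\otimes R_X(\beta)_{1+(i \bmod n)}$, tensored with identity on the remaining qubits). Let $p\ge 1$, let $\bm{\beta}=(\beta_1,\dots,\beta_p),\bm{\gamma}=(\gamma_1,\dots,\gamma_p)\in\mathbb{R}^p$ be arbitrary, let $|s\rangle$ be any $n$-qubit state (e.g. $|s\rangle = H^{\otimes n}|0^{\otimes n}\rangle$), and let $$|\psi_{\mathrm{QAOA}}\rangle = \mathcal{U}_M^{CM}(\beta_p)e^{-i\gamma_p\mathcal{H}_C}\cdots\mathcal{U}_M^{CM}(\beta_2)e^{-i\gamma_2\mathcal{H}_C}\,\mathcal{U}_M^{CM}(\beta_1)e^{-i\gamma_1\mathcal{H}_C}|s\rangle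 .$$ Then the amplitude of $|\bm{\zeta}\rangle$ is left invariant, i.e. $\langle\bm{\zeta}|\psi_{\mathrm{QAOA}}\rangle = \langle\bm{\zeta}|s\rangle$; in particular $\langle\psi_{\mathrm{QAOA}}|P_{\bm{\zeta}}|\psi_{\mathrm{QAOA}}\rangle = \langle s|P_{\bm{\zeta}}|s\rangle$ where $P_{\bm{\zeta}}=|\bm{\zeta}\rangle\langle\bm{\zeta}|$.
   Context: This is the "controlled-mixer QAOA" (CM-QAOA): a QAOA (Quantum Alternating Operator Ansatz) in which the standard mixer is replaced by $\mathcal{U}_M^{CM}$. In the application, $\mathcal{H}_C$ encodes squared lengths of lattice vectors $\vec{x}B$ for coefficient bitstrings, and $|\bm{\zeta}\rangle$ is the computational basis state encoding the zero lattice vector (so $\mathcal{H}_C|\bm{\zeta}\rangle=0$). $X$ denotes the Pauli-X operator and $H$ the Hadamard gate. *)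

theory Defs
  imports Complex_Main
begin

(* n-qubit states: amplitude functions on computational basis states.
   A basis state of n qubits is a bool list of length n (qubits 0..n-1,
   i.e. paper's qubit k is list index k-1; True = |1>). *)
type_synonym qstate = "bool list \<Rightarrow> complex"

definition basis :: "nat \<Rightarrow> bool list set" where
  "basis n = {xs. length xs = n}"

definition is_state :: "nat \<Rightarrow> qstate \<Rightarrow> bool" where
  "is_state n \<psi> \<longleftrightarrow> (\<forall>x. x \<notin> basis n \<longrightarrow> \<psi> x = 0)
     \<and> (\<Sum>x\<in>basis n. (cmod (\<psi> x))\<^sup>2) = 1"

definition ket :: "bool list \<Rightarrow> qstate" where
  "ket z = (\<lambda>x. if x = z then 1 else 0)"

definition inner :: "nat \<Rightarrow> qstate \<Rightarrow> qstate \<Rightarrow> complex" where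
  "inner n \<phi> \<psi> = (\<Sum>x\<in>basis n. cnj (\<phi> x) * \<psi> x)"

definition proj :: "bool list \<Rightarrow> qstate \<Rightarrow> qstate" where
  "proj z \<psi> = (\<lambda>x. if x = z then \<psi> z else 0)"

definition cost_ham :: "(bool list \<Rightarrow> real) \<Rightarrow> qstate \<Rightarrow> qstate" where
  "cost_ham f \<psi> = (\<lambda>x. complex_of_real (f x) * \<psi> x)"

definition cost_unitary :: "(bool list \<Rightarrow> real) \<Rightarrow> real \<Rightarrow> qstate \<Rightarrow> qstate" where
  "cost_unitary f \<gamma> \<psi> = (\<lambda>x. exp (- \<i> * complex_of_real (\<gamma> * f x)) * \<psi> x)"

(* R_X(beta) = exp(-i beta X/2), matrix entries <a|R_X|b> *)
definition rx :: "real \<Rightarrow> bool \<Rightarrow> bool \<Rightarrow> complex" where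
  "rx \<beta> a b = (if a = b then complex_of_real (cos (\<beta>/2))
                 else - \<i> * complex_of_real (sin (\<beta>/2)))"

(* G gate with (0-based) control qubit c and target qubit (c+1) mod n:
   R_X(beta) applied to the target iff the control qubit is in state |1 - zeta_c> *)
definition ctrl_gate :: "nat \<Rightarrow> bool list \<Rightarrow> real \<Rightarrow> nat \<Rightarrow> qstate \<Rightarrow> qstate" where
  "ctrl_gate n z \<beta> c \<psi> = (\<lambda>x. let t = Suc c mod n in
     if x ! c \<noteq> z ! c then (\<Sum>b\<in>UNIV. rx \<beta> (x ! t) b * \<psi> (x[t := b])) else \<psi> x)"

(* U_M^CM(beta) = G_n ... G_1 : G_1 (control index 0) applied first *)
definition cm_mixer :: "nat \<Rightarrow> bool list \<Rightarrow> real \<Rightarrow> qstate \<Rightarrow> qstate" where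
  "cm_mixer n z \<beta> \<psi> = foldl (\<lambda>\<phi> c. ctrl_gate n z \<beta> c \<phi>) \<psi> [0..<n]"

definition qaoa_state :: "nat \<Rightarrow> bool list \<Rightarrow> (bool list \<Rightarrow> real) \<Rightarrow> real list \<Rightarrow> real list
    \<Rightarrow> qstate \<Rightarrow> qstate" where
  "qaoa_state n z f betas gammas s =
     foldl (\<lambda>\<phi> (\<beta>, \<gamma>). cm_mixer n z \<beta> (cost_unitary f \<gamma> \<phi>)) s (zip betas gammas)"

end

theory Submission
  imports Defs
begin

text \<open>Each gate of the mixer acts as the identity on the basis states whose control qubit
  agrees with \<open>\<zeta>\<close>; in particular the amplitude of \<open>|\<zeta>\<rangle>\<close> is read off unchanged.
  The cost layer multiplies that amplitude by \<open>e\<^sup>0 = 1\<close>, since \<open>f \<zeta> = 0\<close>.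
  Hence every QAOA layer leaves \<open>\<langle>\<zeta>|\<psi>\<rangle>\<close> fixed, and so also \<open>|\<langle>\<zeta>|\<psi>\<rangle>|\<^sup>2\<close>.\<close>

lemma ctrl_gate_apply_control_eq:
  "x ! c = z ! c \<Longrightarrow> ctrl_gate n z \<beta> c \<psi> x = \<psi> x"
  by (simp add: ctrl_gate_def Let_def)

lemma cm_mixer_apply_self: "cm_mixer n z \<beta> \<psi> z = \<psi> z"
proof -
  have "foldl (\<lambda>\<phi> c. ctrl_gate n z \<beta> c \<phi>) \<psi> cs z = \<psi> z" for cs
    by (induction cs arbitrary: \<psi>) (simp_all add: ctrl_gate_apply_control_eq)
  then show ?thesis
    by (simp add: cm_mixer_def)
qed

lemma cost_unitary_apply_root: "f x = 0 \<Longrightarrow> cost_unitary f \<gamma> \<psi> x = \<psi> x"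
  by (simp add: cost_unitary_def)

lemma cost_ham_ket_eq_0_iff: "cost_ham f (ket z) = (\<lambda>_. 0) \<longleftrightarrow> f z = 0"
  by (auto simp: cost_ham_def ket_def fun_eq_iff)

lemma qaoa_state_apply_self:
  assumes "f z = 0"
  shows "qaoa_state n z f betas gammas s z = s z"
proof -
  have "foldl (\<lambda>\<phi> (\<beta>, \<gamma>). cm_mixer n z \<beta> (cost_unitary f \<gamma> \<phi>)) s layers z = s z" for layers
    by (induction layers arbitrary: s)
      (auto simp: cm_mixer_apply_self cost_unitary_apply_root assms)
  then show ?thesis
    by (simp add: qaoa_state_def)
qed

lemma finite_basis: "finite (basis n)"
  using finite_lists_length_eq[of "UNIV :: bool set" n] by (simp add: basis_def)

lemma inner_ket_left:
  assumes "z \<in> basis n"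
  shows "inner n (ket z) \<phi> = \<phi> z"
proof -
  have "inner n (ket z) \<phi> = (\<Sum>x\<in>basis n. if x = z then \<phi> z else 0)"
    unfolding inner_def by (rule sum.cong) (auto simp: ket_def)
  then show ?thesis
    using assms by (simp add: finite_basis)
qed

lemma inner_proj_self:
  assumes "z \<in> basis n"
  shows "inner n \<phi> (proj z \<phi>) = (cmod (\<phi> z))\<^sup>2"
proof -
  have "inner n \<phi> (proj z \<phi>) = cnj (\<phi> z) * \<phi> z"
    using assms unfolding inner_def proj_def
    by (simp add: finite_basis if_distrib cong: if_cong)
  then show ?thesis
    by (metis complex_norm_square mult.commute)
qed

theorem proposition1:
  fixes n p :: nat and z :: "bool list" and f :: "bool list \<Rightarrow> real"
    and betas gammas :: "real list" and s :: qstate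
  assumes "n \<ge> 2"
    and "length z = n"
    and "cost_ham f (ket z) = (\<lambda>_. 0)"
    and "p \<ge> 1" and "length betas = p" and "length gammas = p"
    and "is_state n s"
  shows "inner n (ket z) (qaoa_state n z f betas gammas s) = inner n (ket z) s
    \<and> inner n (qaoa_state n z f betas gammas s) (proj z (qaoa_state n z f betas gammas s))
      = inner n s (proj z s)"
proof -
  have "z \<in> basis n"
    using \<open>length z = n\<close> by (simp add: basis_def)
  moreover have "qaoa_state n z f betas gammas s z = s z"
    using \<open>cost_ham f (ket z) = (\<lambda>_. 0)\<close>
    by (simp add: cost_ham_ket_eq_0_iff qaoa_state_apply_self)
  ultimately show ?thesis
    by (simp add: inner_ket_left inner_proj_self)
qed

end
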